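(* Let $(\mathcal{G},d_\mathcal{G})$, $(\mathcal{X},d_\mathcal{X})$, $(\mathcal{Y},d_\mathcal{Y})$ be pseudo-metric spaces and let $\mathcal{H}$ be the class of $c_\mathcal{H}$-Lipschitz continuous graph embeddings from $(\mathcal{G},d_\mathcal{G})$ to $(\mathcal{X},d_\mathcal{X})$. Assume the loss function $\ell\colon\mathcal{X}\times\mathcal{Y}\to\mathbb{R}^+$ is $c_\ell$-Lipschitz with respect to $d_\infty$. Then, for every $\varepsilon>0$, graph learning algorithms for $\mathcal{H}$ are $\bigl(\mathcal{N}(\mathcal{G},d_\mathcal{G},\varepsilon/(2c_\mathcal{H}))\cdot\mathcal{N}(\mathcal{Y},d_\mathcal{Y},\varepsilon/2),\ c_\ell\varepsilon\bigr)$-robust.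
   Context: A pseudo-metric satisfies $d(x,x)=0$, symmetry and the triangle inequality. $d_\infty((x,y),(x',y'))=\max\{d_\mathcal{X}(x,x'),d_\mathcal{Y}(y,y')\}$. $f$ is $c$-Lipschitz if $d(f(x),f(x'))\le c\,d(x,x')$. $\mathcal{N}(\mathcal{X},d,\varepsilon)$ is the minimal cardinality of an $\varepsilon$-cover (a subset $C$ such that every point is within distance $\varepsilon$ of some point of $C$). Learning setup: $\mathcal{Z}=\mathcal{G}\times\mathcal{Y}$ with a distribution; a graph learning algorithm maps each sample $\mathcal{S}$ (finite i.i.d. collection from $\mathcal{Z}$) to $h_\mathcal{S}\in\mathcal{H}$. The algorithm is $(K,\varepsilon)$-robust if for all samples $\mathcal{S}$, $\mathcal{Z}$ can be partitioned into $K$ sets $C_i$ such that whenever $(G,y)\in\mathcal{S}\cap C_i$ and $(G',y')\in C_i$, $|\ell(h_\mathcal{S}(G),y)-\ell(h_\mathcal{S}(G'),y')|<\varepsilon$. *)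

theory Defs
  imports Complex_Main
begin

definition pseudo_metric :: "('a \<Rightarrow> 'a \<Rightarrow> real) \<Rightarrow> bool" where
  "pseudo_metric d \<longleftrightarrow> (\<forall>x. d x x = 0) \<and> (\<forall>x y. d x y = d y x)
     \<and> (\<forall>x y z. d x z \<le> d x y + d y z)"

definition d_inf :: "('a \<Rightarrow> 'a \<Rightarrow> real) \<Rightarrow> ('b \<Rightarrow> 'b \<Rightarrow> real)
    \<Rightarrow> ('a \<times> 'b) \<Rightarrow> ('a \<times> 'b) \<Rightarrow> real" where
  "d_inf dA dB p q = max (dA (fst p) (fst q)) (dB (snd p) (snd q))"

definition lipschitz_wrt :: "('a \<Rightarrow> 'a \<Rightarrow> real) \<Rightarrow> ('b \<Rightarrow> 'b \<Rightarrow> real) \<Rightarrow> real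
    \<Rightarrow> ('a \<Rightarrow> 'b) \<Rightarrow> bool" where
  "lipschitz_wrt dA dB c f \<longleftrightarrow> (\<forall>x x'. dB (f x) (f x') \<le> c * dA x x')"

definition real_dist :: "real \<Rightarrow> real \<Rightarrow> real" where
  "real_dist a b = \<bar>a - b\<bar>"

definition is_cover :: "('a \<Rightarrow> 'a \<Rightarrow> real) \<Rightarrow> real \<Rightarrow> 'a set \<Rightarrow> bool" where
  "is_cover d eps C \<longleftrightarrow> (\<forall>x. \<exists>c\<in>C. d x c < eps)"

definition covering_number :: "('a \<Rightarrow> 'a \<Rightarrow> real) \<Rightarrow> real \<Rightarrow> nat" where
  "covering_number d eps = (LEAST n. \<exists>C. finite C \<and> card C = n \<and> is_cover d eps C)"

definition robust :: "(('g \<times> 'y) list \<Rightarrow> 'g \<Rightarrow> 'x) \<Rightarrow> ('x \<times> 'y \<Rightarrow> real)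
    \<Rightarrow> nat \<Rightarrow> real \<Rightarrow> bool" where
  "robust A l K eps \<longleftrightarrow>
     (\<forall>S. \<exists>C :: nat \<Rightarrow> ('g \<times> 'y) set.
        (\<Union>i<K. C i) = UNIV \<and>
        (\<forall>i<K. \<forall>j<K. i \<noteq> j \<longrightarrow> C i \<inter> C j = {}) \<and>
        (\<forall>i<K. \<forall>g y g' y'. (g, y) \<in> set S \<and> (g, y) \<in> C i \<and> (g', y') \<in> C i \<longrightarrow>
            \<bar>l (A S g, y) - l (A S g', y')\<bar> < eps))"

end

theory Submission
  imports Defs
begin

(* Fix minimal covers CG of the graphs at scale eps/(2 cH) and CY of the labels at scale eps/2,
   and send each labelled graph (g, y) to a pair of centres close to g and y.  The fibres of this
   map partition G x Y into |CG| * |CY| cells, independently of the sample.  Two points of a cell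
   have graphs at distance < eps/cH and labels at distance < eps, so every cH-Lipschitz embedding
   keeps their images eps-close in X, and the cl-Lipschitz loss changes by less than cl * eps. *)

lemma covering_number_attained:
  assumes "\<exists>C. finite C \<and> is_cover d e C"
  obtains C where "finite C" "card C = covering_number d e" "is_cover d e C"
  using LeastI_ex[where P = "\<lambda>n. \<exists>C. finite C \<and> card C = n \<and> is_cover d e C"] assms
  unfolding covering_number_def by blast

lemma is_cover_obtains_center_map:
  assumes "is_cover d e C"
  obtains f where "\<And>x. f x \<in> C" "\<And>x. d x (f x) < e"
  using assms unfolding is_cover_def by metis

lemma covering_number_center_map:
  assumes "\<exists>C. finite C \<and> is_cover d e C"
  obtains C f where "finite C" "card C = covering_number d e"
    and "\<And>x. f x \<in> C" "\<And>x. d x (f x) < e"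
proof -
  obtain C where "finite C" "card C = covering_number d e" "is_cover d e C"
    using covering_number_attained[OF assms] .
  moreover obtain f where "\<And>x. f x \<in> C" "\<And>x. d x (f x) < e"
    using is_cover_obtains_center_map[OF \<open>is_cover d e C\<close>] by blast
  ultimately show ?thesis
    using that by blast
qed

lemma pseudo_metric_same_center_less:
  assumes "pseudo_metric d" "\<And>x. d x (f x) < r" "f x = f x'"
  shows "d x x' < 2 * r"
proof -
  have "d x x' \<le> d x (f x) + d (f x') x'" and "d (f x') x' = d x' (f x')"
    using assms(1,3) unfolding pseudo_metric_def by metis+
  with assms(2)[of x] assms(2)[of x'] show ?thesis by linarith
qed

lemma lipschitz_loss_diff_less:
  assumes "lipschitz_wrt (d_inf dX dY) real_dist cl l" "lipschitz_wrt dG dX cH h"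
    and "cH > 0" "cl > 0" "dG g g' < eps / cH" "dY y y' < eps"
  shows "\<bar>l (h g, y) - l (h g', y')\<bar> < cl * eps"
proof -
  have "dX (h g) (h g') \<le> cH * dG g g'"
    using assms(2) unfolding lipschitz_wrt_def by blast
  also have "\<dots> < eps"
    using assms(3,5) by (simp add: pos_less_divide_eq mult.commute)
  finally have "d_inf dX dY (h g, y) (h g', y') < eps"
    using assms(6) by (simp add: d_inf_def)
  with assms(4) have "cl * d_inf dX dY (h g, y) (h g', y') < cl * eps"
    by simp
  moreover have "real_dist (l (h g, y)) (l (h g', y')) \<le> cl * d_inf dX dY (h g, y) (h g', y')"
    using assms(1) unfolding lipschitz_wrt_def by blast
  ultimately show ?thesis
    unfolding real_dist_def by linarith
qed

lemma finite_range_fibres_partition: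
  assumes "finite F" "range q \<subseteq> F"
  obtains C :: "nat \<Rightarrow> 'a set"
  where "(\<Union>i<card F. C i) = UNIV"
    and "\<forall>i<card F. \<forall>j<card F. i \<noteq> j \<longrightarrow> C i \<inter> C j = {}"
    and "\<And>i p p'. p \<in> C i \<Longrightarrow> p' \<in> C i \<Longrightarrow> q p = q p'"
proof -
  obtain en where en: "bij_betw en {..<card F} F"
    using ex_bij_betw_nat_finite[OF assms(1)] by (metis atLeast0LessThan)
  show ?thesis
  proof
    show "(\<Union>i<card F. q -` {en i}) = UNIV"
      using assms(2) bij_betw_imp_surj_on[OF en] by (fastforce simp: image_iff)
    show "\<forall>i<card F. \<forall>j<card F. i \<noteq> j \<longrightarrow> q -` {en i} \<inter> q -` {en j} = {}"
      using bij_betw_imp_inj_on[OF en] by (auto simp: inj_on_def)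
  qed auto
qed

lemma robust_if_loss_stable_on_fibres:
  assumes "finite F" "range q \<subseteq> F"
    and "\<And>S g y g' y'. q (g, y) = q (g', y') \<Longrightarrow> \<bar>l (A S g, y) - l (A S g', y')\<bar> < eps"
  shows "robust A l (card F) eps"
proof -
  obtain C :: "nat \<Rightarrow> _"
    where cover: "(\<Union>i<card F. C i) = UNIV"
      and disjoint: "\<forall>i<card F. \<forall>j<card F. i \<noteq> j \<longrightarrow> C i \<inter> C j = {}"
      and fibre: "\<And>i p p'. p \<in> C i \<Longrightarrow> p' \<in> C i \<Longrightarrow> q p = q p'"
    using finite_range_fibres_partition[OF assms(1,2)] by blast
  have stable: "\<bar>l (A S g, y) - l (A S g', y')\<bar> < eps"
    if "(g, y) \<in> C i" "(g', y') \<in> C i" for S i g y g' y'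
    using assms(3)[OF fibre[OF that]] .
  show ?thesis
    unfolding robust_def
    by (intro allI exI[of _ C] conjI cover disjoint) (blast intro: stable)
qed

theorem mainTheorem8:
  fixes dG :: "'g \<Rightarrow> 'g \<Rightarrow> real"
    and dX :: "'x \<Rightarrow> 'x \<Rightarrow> real"
    and dY :: "'y \<Rightarrow> 'y \<Rightarrow> real"
    and cH cl eps :: real
    and l :: "'x \<times> 'y \<Rightarrow> real"
    and A :: "('g \<times> 'y) list \<Rightarrow> 'g \<Rightarrow> 'x"
  assumes "pseudo_metric dG" and "pseudo_metric dX" and "pseudo_metric dY"
    and "cH > 0" and "cl > 0"
    and "\<forall>p. l p \<ge> 0"
    and "lipschitz_wrt (d_inf dX dY) real_dist cl l"
    and "\<forall>S. A S \<in> {h. lipschitz_wrt dG dX cH h}"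
    and "eps > 0"
    and "\<exists>C. finite C \<and> is_cover dG (eps / (2 * cH)) C"
    and "\<exists>C. finite C \<and> is_cover dY (eps / 2) C"
  shows "robust A l (covering_number dG (eps / (2 * cH)) * covering_number dY (eps / 2)) (cl * eps)"
proof -
  obtain CG fG where CG: "finite CG" "card CG = covering_number dG (eps / (2 * cH))"
    and fG: "\<And>g. fG g \<in> CG" "\<And>g. dG g (fG g) < eps / (2 * cH)"
    using covering_number_center_map[OF assms(10)] by blast
  obtain CY fY where CY: "finite CY" "card CY = covering_number dY (eps / 2)"
    and fY: "\<And>y. fY y \<in> CY" "\<And>y. dY y (fY y) < eps / 2"
    using covering_number_center_map[OF assms(11)] by blast
  define q where "q = (\<lambda>(g, y). (fG g, fY y))"
  have "range q \<subseteq> CG \<times> CY"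
    using fG(1) fY(1) by (auto simp: q_def)
  moreover have "\<bar>l (A S g, y) - l (A S g', y')\<bar> < cl * eps"
    if "q (g, y) = q (g', y')" for S g y g' y'
  proof (rule lipschitz_loss_diff_less[where h = "A S"])
    show "dG g g' < eps / cH"
      using pseudo_metric_same_center_less[OF assms(1) fG(2), of g g'] that by (simp add: q_def)
    show "dY y y' < eps"
      using pseudo_metric_same_center_less[OF assms(3) fY(2), of y y'] that by (simp add: q_def)
    show "lipschitz_wrt dG dX cH (A S)"
      using assms(8) by blast
  qed (fact assms(4,5,7))+
  ultimately have "robust A l (card (CG \<times> CY)) (cl * eps)"
    using CG(1) CY(1) by (intro robust_if_loss_stable_on_fibres[of "CG \<times> CY" q]) simp_all
  then show ?thesis
    using CG(2) CY(2) by (simp add: card_cartesian_product)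
qed

end
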